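(* Let $w$ be an infinite word over the binary alphabet $\{0,1\}$. 1. If $w$ is of bounded width, then $w$ is weak abelian periodic. 2. There exists an infinite binary word of bounded width which is not bounded weak abelian periodic. 3. If $w$ is bounded weak abelian periodic, then $w$ is of bounded width.
   Context: For a finite word $u$ and a letter $a$, $|u|_a$ is the number of occurrences of $a$ in $u$, and for nonempty $u$ the frequency of $a$ in $u$ is $\rho_a(u)=|u|_a/|u|$. An infinite word $w$ over a finite alphabet $\Sigma$ is weak abelian periodic (WAP) if $w=v_0v_1v_2\cdots$ with $v_0$ a finite word and $v_1,v_2,\dots$ nonempty finite words such that $\rho_a(v_i)=\rho_a(v_j)$ for all $a\in\Sigma$ and all $i,j\ge 1$. It is bounded WAP if moreover such a factorization exists with $|v_i|\le C$ for all $i$, for some constant $C$. The graphic $g_w$ of a binary word $w=w_1w_2\cdots$ is the piecewise linear path in $\mathbb{R}^2$ starting at $(0,0)$ where the $n$-th step moves by the vector $(1,-1)$ if $w_n=0$ and by $(1,1)$ if $w_n=1$; thus $g_w$ is a function with $g_w(n)=|w_1\cdots w_n|_1-|w_1\cdots w_n|_0$ at integers, linear in between. A binary infinite word $w$ is of bounded width if there exist rational numbers $a,b_1,b_2$ with $ax+b_1\le g_w(x)\le ax+b_2$ for all $x\ge 0$. *)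

theory Defs
  imports Complex_Main
begin

text \<open>Infinite words are functions nat => 'a; letter w_{n+1} of the paper is w n.
  Binary words are nat => bool, with False standing for letter 0 and True for letter 1.\<close>

definition factor :: "(nat \<Rightarrow> 'a) \<Rightarrow> nat \<Rightarrow> nat \<Rightarrow> 'a list" where
  "factor w i j = map w [i..<j]"

definition freq :: "'a \<Rightarrow> 'a list \<Rightarrow> real" where
  "freq a u = real (count_list u a) / real (length u)"

text \<open>Factorization w = v0 v1 v2 ... with cut points p 0 < p 1 < ...:
  v0 = w[0, p 0), v_{i+1} = w[p i, p (i+1)) (nonempty by strict monotonicity).\<close>

definition WAP :: "(nat \<Rightarrow> 'a) \<Rightarrow> bool" where
  "WAP w \<longleftrightarrow> (\<exists>p::nat \<Rightarrow> nat. strict_mono p \<and>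
     (\<forall>i j a. freq a (factor w (p i) (p (Suc i))) = freq a (factor w (p j) (p (Suc j)))))"

definition bounded_WAP :: "(nat \<Rightarrow> 'a) \<Rightarrow> bool" where
  "bounded_WAP w \<longleftrightarrow> (\<exists>p::nat \<Rightarrow> nat. \<exists>C::nat. strict_mono p \<and>
     (\<forall>i j a. freq a (factor w (p i) (p (Suc i))) = freq a (factor w (p j) (p (Suc j)))) \<and>
     (\<forall>i. p (Suc i) - p i \<le> C))"

definition step :: "bool \<Rightarrow> int" where
  "step b = (if b then 1 else -1)"

definition graph_int :: "(nat \<Rightarrow> bool) \<Rightarrow> nat \<Rightarrow> int" where
  "graph_int w n = (\<Sum>k<n. step (w k))"

definition graphic :: "(nat \<Rightarrow> bool) \<Rightarrow> real \<Rightarrow> real" where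
  "graphic w x = (let n = nat \<lfloor>x\<rfloor> in
      real_of_int (graph_int w n) + (x - real n) * real_of_int (step (w n)))"

definition bounded_width :: "(nat \<Rightarrow> bool) \<Rightarrow> bool" where
  "bounded_width w \<longleftrightarrow> (\<exists>a b1 b2 :: real. a \<in> \<rat> \<and> b1 \<in> \<rat> \<and> b2 \<in> \<rat> \<and>
     (\<forall>x::real. x \<ge> 0 \<longrightarrow> a * x + b1 \<le> graphic w x \<and> graphic w x \<le> a * x + b2))"

end

(*
  Over a factor u, the graphic of a binary word rises by 2|u|_1 - |u|, so a factorization has
  factors of equal frequencies exactly when its cut points lie on one line through the graphic.
  If the graphic stays between two lines of rational slope r/q, the integer q g(n) - r n takes
  finitely many values, so one of them is taken at infinitely many n: these are cut points on a
  line. Conversely, cut points on a line with bounded gaps keep the graphic within bounded distance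
  of that line. The word whose graphic oscillates between 0 and 1, but between 2 and 3 on the
  plateaus [4^k, 2 4^k], has bounded width; cut points on a line must here lie at one height, and
  with bounded gaps they would meet both a plateau and the long stretch after it.
*)
theory Submission
  imports Defs "HOL-Library.Infinite_Set"
begin

lemma graph_int_0 [simp]: "graph_int w 0 = 0"
  by (simp add: graph_int_def)

lemma graph_int_Suc [simp]: "graph_int w (Suc n) = graph_int w n + step (w n)"
  by (simp add: graph_int_def)

lemma count_list_True_plus_False: "count_list u True + count_list u False = length u"
  by (induction u) auto

lemma graph_int_diff_count:
  assumes "i \<le> j"
  shows "graph_int w j - graph_int w i =
    int (count_list (factor w i j) True) - int (count_list (factor w i j) False)"
  using assms
proof (induction j rule: dec_induct)
  case base
  then show ?case by (simp add: factor_def)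
next
  case (step j)
  then have "factor w i (Suc j) = factor w i j @ [w j]"
    by (simp add: factor_def)
  with step.IH show ?case by (simp add: step_def)
qed

lemma graph_int_lipschitz: "\<bar>graph_int w n - graph_int w m\<bar> \<le> \<bar>int n - int m\<bar>"
proof -
  have "\<bar>graph_int w j - graph_int w i\<bar> \<le> int j - int i" if "i \<le> j" for i j
    using that by (induction j rule: dec_induct) (auto simp: step_def)
  from this[of m n] this[of n m] show ?thesis
    by (cases "m \<le> n") (simp_all add: abs_minus_commute)
qed

lemma graphic_of_nat: "graphic w (real n) = graph_int w n"
  by (simp add: graphic_def)

lemma graphic_near_graph_int:
  assumes "x \<ge> 0"
  shows "\<bar>graphic w x - graph_int w (nat \<lfloor>x\<rfloor>)\<bar> \<le> 1"
proof -
  have "real (nat \<lfloor>x\<rfloor>) = \<lfloor>x\<rfloor>" "0 \<le> x - \<lfloor>x\<rfloor>" "x - \<lfloor>x\<rfloor> \<le> 1"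
    using assms by linarith+
  then have "\<bar>(x - real (nat \<lfloor>x\<rfloor>)) * step (w (nat \<lfloor>x\<rfloor>))\<bar> \<le> 1"
    by (simp add: step_def)
  then show ?thesis
    by (simp add: graphic_def Let_def)
qed

text \<open>At i = j the division by zero gives 0.\<close>
definition slope :: "(nat \<Rightarrow> bool) \<Rightarrow> nat \<Rightarrow> nat \<Rightarrow> real" where
  "slope w i j = (graph_int w j - graph_int w i) / (real j - real i)"

lemma graph_int_diff_slope:
  "i < j \<Longrightarrow> real_of_int (graph_int w j - graph_int w i) = slope w i j * (real j - real i)"
  by (simp add: slope_def)

lemma freq_factor_slope:
  assumes "i < j"
  shows "freq b (factor w i j) = (1 + step b * slope w i j) / 2"
proof -
  let ?L = "real j - real i" and ?s = "slope w i j"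
  let ?t = "real (count_list (factor w i j) True)" and ?f = "real (count_list (factor w i j) False)"
  have "?t + ?f = ?L"
    using count_list_True_plus_False[of "factor w i j"] assms
    by (simp add: factor_def flip: of_nat_add)
  moreover have "real_of_int (graph_int w j - graph_int w i) = ?t - ?f"
    using graph_int_diff_count[of i j w] assms by simp
  then have "?t - ?f = ?s * ?L"
    using graph_int_diff_slope[OF assms, of w] by simp
  ultimately have "?t = (1 + ?s) / 2 * ?L" "?f = (1 - ?s) / 2 * ?L"
    by (simp_all add: algebra_simps)
  moreover have "real (length (factor w i j)) = ?L" "?L > 0"
    using assms by (simp_all add: factor_def)
  ultimately show ?thesis
    by (cases b) (simp_all add: freq_def step_def)
qed

lemma slope_rational: "slope w i j \<in> \<rat>"
  by (simp add: slope_def)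

lemma abs_slope_le_1: "\<bar>slope w i j\<bar> \<le> 1"
proof -
  have "\<bar>real_of_int (graph_int w j - graph_int w i)\<bar> \<le> \<bar>real j - real i\<bar>"
    using graph_int_lipschitz[of w j i] by linarith
  then show ?thesis
    by (simp add: slope_def abs_divide divide_le_eq_1)
qed

lemma equal_freqs_iff_equal_slopes:
  assumes "strict_mono p"
  shows "(\<forall>i j b. freq b (factor w (p i) (p (Suc i))) = freq b (factor w (p j) (p (Suc j))))
    \<longleftrightarrow> (\<forall>i. slope w (p i) (p (Suc i)) = slope w (p 0) (p 1))"
proof -
  have cut: "p i < p (Suc i)" for i
    using assms by (simp add: strict_mono_Suc_iff)
  show ?thesis
  proof
    assume "\<forall>i j b. freq b (factor w (p i) (p (Suc i))) = freq b (factor w (p j) (p (Suc j)))"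
    then have "freq True (factor w (p i) (p (Suc i))) = freq True (factor w (p 0) (p (Suc 0)))" for i
      by blast
    then show "\<forall>i. slope w (p i) (p (Suc i)) = slope w (p 0) (p 1)"
      by (simp add: freq_factor_slope[OF cut] step_def)
  next
    assume "\<forall>i. slope w (p i) (p (Suc i)) = slope w (p 0) (p 1)"
    then have "slope w (p i) (p (Suc i)) = slope w (p j) (p (Suc j))" for i j
      by metis
    then show "\<forall>i j b. freq b (factor w (p i) (p (Suc i))) = freq b (factor w (p j) (p (Suc j)))"
      by (simp add: freq_factor_slope[OF cut])
  qed
qed

lemma graph_int_linear_on_cuts:
  assumes "strict_mono p" and "\<forall>i. slope w (p i) (p (Suc i)) = s"
  shows "graph_int w (p i) = graph_int w (p 0) + s * (real (p i) - real (p 0))"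
proof (induction i)
  case (Suc i)
  have "p i < p (Suc i)"
    using assms(1) by (simp add: strict_mono_Suc_iff)
  from graph_int_diff_slope[OF this, of w] Suc assms(2) show ?case
    by (simp add: algebra_simps)
qed simp

lemma strict_mono_cut_interval:
  fixes p :: "nat \<Rightarrow> nat"
  assumes "strict_mono p" and "p 0 \<le> n"
  obtains i where "p i \<le> n" and "n < p (Suc i)"
proof -
  have "\<exists>i. p i \<le> n \<and> n < p (Suc i)"
  proof (rule ccontr)
    assume "\<nexists>i. p i \<le> n \<and> n < p (Suc i)"
    then have "p i \<le> n" for i
      using assms(2) by (induction i) (auto simp: not_less)
    moreover have "Suc n \<le> p (Suc n)"
      using strict_mono_imp_increasing[OF assms(1)] .
    ultimately show False
      by (metis not_less_eq_eq)
  qed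
  with that show ?thesis by blast
qed

lemma bounded_width_if_near_line:
  assumes "a \<in> \<rat>" and "B \<in> \<rat>" and near: "\<And>n. \<bar>graph_int w n - a * real n\<bar> \<le> B"
  shows "bounded_width w"
proof -
  let ?b = "B + 1 + \<bar>a\<bar>"
  have "\<bar>graphic w x - a * x\<bar> \<le> ?b" if "x \<ge> 0" for x
  proof -
    define n where "n = nat \<lfloor>x\<rfloor>"
    have "\<bar>x - real n\<bar> \<le> 1"
      using that unfolding n_def by linarith
    then have "\<bar>a * (x - real n)\<bar> \<le> \<bar>a\<bar>"
      by (simp add: abs_mult mult_left_le)
    moreover have "graphic w x - a * x =
        (graphic w x - graph_int w n) + (graph_int w n - a * real n) - a * (x - real n)"
      by (simp add: algebra_simps)
    ultimately show ?thesis
      using graphic_near_graph_int[OF that, of w] near[of n] unfolding n_def by linarith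
  qed
  then have "a * x + - ?b \<le> graphic w x \<and> graphic w x \<le> a * x + ?b" if "x \<ge> 0" for x
    using that unfolding abs_le_iff by fastforce
  moreover have "?b \<in> \<rat>" "- ?b \<in> \<rat>"
    using assms(1,2) by simp_all
  ultimately show ?thesis
    using assms(1) unfolding bounded_width_def by blast
qed

lemma bounded_width_imp_WAP:
  assumes "bounded_width w"
  shows "WAP w"
proof -
  obtain a b1 b2 :: real where "a \<in> \<rat>"
    and bnd: "\<forall>x\<ge>0. a * x + b1 \<le> graphic w x \<and> graphic w x \<le> a * x + b2"
    using assms unfolding bounded_width_def by blast
  then obtain r q :: int where q: "q > 0" and a: "a = r / q"
    by (auto elim: Rats_cases')
  define D where "D n = q * graph_int w n - r * int n" for n
  have D_real: "D n = q * (graph_int w n - a * real n)" for n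
    unfolding D_def a using q by (simp add: field_simps)
  have "D n \<in> {\<lceil>q * b1\<rceil> .. \<lfloor>q * b2\<rfloor>}" for n
  proof -
    have "b1 \<le> graph_int w n - a * real n" "graph_int w n - a * real n \<le> b2"
      using bnd[rule_format, of "real n"] by (simp_all add: graphic_of_nat)
    with q show ?thesis
      unfolding atLeastAtMost_iff ceiling_le_iff le_floor_iff D_real by simp
  qed
  then have "finite (range D)"
    by (meson finite_atLeastAtMost_int finite_subset image_subset_iff)
  then obtain n0 where "infinite {n. D n = D n0}"
    using pigeonhole_infinite[of UNIV D] by auto
  then obtain p :: "nat \<Rightarrow> nat" where p: "strict_mono p" and level: "\<And>i. D (p i) = D n0"
    using infinite_enumerate by blast
  have "slope w (p i) (p (Suc i)) = a" for i
  proof -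
    have lt: "p i < p (Suc i)"
      using p by (simp add: strict_mono_Suc_iff)
    have "q * (graph_int w (p (Suc i)) - a * real (p (Suc i))) = q * (graph_int w (p i) - a * real (p i))"
      using level[of i] level[of "Suc i"] D_real by metis
    with q have "graph_int w (p (Suc i)) - a * real (p (Suc i)) = graph_int w (p i) - a * real (p i)"
      by simp
    with lt show ?thesis
      by (simp add: slope_def field_simps)
  qed
  then have "\<forall>i. slope w (p i) (p (Suc i)) = slope w (p 0) (p 1)"
    by simp
  with p show ?thesis
    unfolding WAP_def using equal_freqs_iff_equal_slopes by blast
qed

lemma bounded_WAP_linear_on_cuts:
  assumes "bounded_WAP w"
  obtains p :: "nat \<Rightarrow> nat" and C s where "strict_mono p" "\<And>i. p (Suc i) - p i \<le> C"
    "s \<in> \<rat>" "\<bar>s\<bar> \<le> 1" "\<And>i. graph_int w (p i) = graph_int w (p 0) + s * (real (p i) - real (p 0))"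
proof -
  obtain p :: "nat \<Rightarrow> nat" and C where p: "strict_mono p" and gap: "\<forall>i. p (Suc i) - p i \<le> C"
    and "\<forall>i j b. freq b (factor w (p i) (p (Suc i))) = freq b (factor w (p j) (p (Suc j)))"
    using assms unfolding bounded_WAP_def by blast
  then have "\<forall>i. slope w (p i) (p (Suc i)) = slope w (p 0) (p 1)"
    using equal_freqs_iff_equal_slopes by blast
  from that[OF p _ slope_rational abs_slope_le_1 graph_int_linear_on_cuts[OF p this]] gap
  show ?thesis by blast
qed

lemma graph_int_minus_line_lipschitz:
  assumes "\<bar>s\<bar> \<le> 1"
  shows "\<bar>(graph_int w n - s * real n) - (graph_int w m - s * real m)\<bar> \<le> 2 * \<bar>real n - real m\<bar>"
proof -
  have graph: "\<bar>real_of_int (graph_int w n - graph_int w m)\<bar> \<le> \<bar>real n - real m\<bar>"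
    using graph_int_lipschitz[of w n m] by linarith
  have line: "\<bar>s * (real n - real m)\<bar> \<le> \<bar>real n - real m\<bar>"
    using assms by (simp add: abs_mult mult_left_le_one_le)
  have "\<bar>(graph_int w n - s * real n) - (graph_int w m - s * real m)\<bar> =
      \<bar>real_of_int (graph_int w n - graph_int w m) - s * (real n - real m)\<bar>"
    by (simp add: algebra_simps)
  also have "\<dots> \<le> \<bar>real_of_int (graph_int w n - graph_int w m)\<bar> + \<bar>s * (real n - real m)\<bar>"
    by (rule abs_triangle_ineq4)
  also have "\<dots> \<le> \<bar>real n - real m\<bar> + \<bar>real n - real m\<bar>"
    using graph line by (rule add_mono)
  finally show ?thesis by simp
qed

lemma bounded_WAP_imp_bounded_width:
  assumes "bounded_WAP w"
  shows "bounded_width w"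
proof -
  obtain p :: "nat \<Rightarrow> nat" and C s where p: "strict_mono p" and gap: "\<And>i. p (Suc i) - p i \<le> C"
    and "s \<in> \<rat>" and s: "\<bar>s\<bar> \<le> 1"
    and lin: "\<And>i. graph_int w (p i) = graph_int w (p 0) + s * (real (p i) - real (p 0))"
    using bounded_WAP_linear_on_cuts[OF assms] by blast
  let ?dev = "\<lambda>n. graph_int w n - s * real n"
  have start: "\<bar>?dev n\<bar> \<le> 2 * real n" for n
    using graph_int_minus_line_lipschitz[OF s, of w n 0] by simp
  have "\<bar>?dev n\<bar> \<le> 2 * real C + 2 * real (p 0)" for n
  proof (cases "p 0 \<le> n")
    case True
    then obtain i where i: "p i \<le> n" "n < p (Suc i)"
      using strict_mono_cut_interval[OF p] by blast
    have "real n - real (p i) \<le> real C"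
      using gap[of i] i by linarith
    then have "\<bar>?dev n - ?dev (p i)\<bar> \<le> 2 * real C"
      using graph_int_minus_line_lipschitz[OF s, of w n "p i"] i(1) by simp
    moreover have "?dev (p i) = ?dev (p 0)"
      using lin[of i] by (simp add: algebra_simps)
    ultimately show ?thesis
      using start[of "p 0"] by linarith
  next
    case False
    then show ?thesis
      using start[of n] by simp
  qed
  with \<open>s \<in> \<rat>\<close> show ?thesis
    by (intro bounded_width_if_near_line[where B = "2 * real C + 2 * real (p 0)"]) auto
qed

lemma strict_mono_cut_in_window:
  fixes p :: "nat \<Rightarrow> nat"
  assumes "strict_mono p" and "\<And>i. p (Suc i) - p i \<le> C" and "p 0 \<le> m"
  obtains i where "m < p i" and "p i \<le> m + C"
proof -
  obtain i where "p i \<le> m" "m < p (Suc i)"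
    using strict_mono_cut_interval[OF assms(1,3)] .
  with assms(2)[of i] that[of "Suc i"] show ?thesis by linarith
qed

lemma strict_mono_linear_bounded_imp_zero:
  fixes p :: "nat \<Rightarrow> nat"
  assumes "strict_mono p" and bnd: "\<And>i. \<bar>s * (real (p i) - real (p 0))\<bar> \<le> M"
  shows "s = 0"
proof (rule ccontr)
  assume "s \<noteq> 0"
  then obtain i where "M < real i * \<bar>s\<bar>"
    using ex_less_of_nat_mult[of "\<bar>s\<bar>" M] by auto
  have "p 0 + i \<le> p i"
    using assms(1) by (induction i) (auto simp: strict_mono_Suc_iff Suc_le_eq intro: le_less_trans)
  then have "real i * \<bar>s\<bar> \<le> (real (p i) - real (p 0)) * \<bar>s\<bar>"
    by (intro mult_right_mono) auto
  also have "\<dots> = \<bar>s * (real (p i) - real (p 0))\<bar>"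
    using \<open>p 0 + i \<le> p i\<close> by (simp add: abs_mult mult.commute)
  finally have "M < \<bar>s * (real (p i) - real (p 0))\<bar>"
    using \<open>M < real i * \<bar>s\<bar>\<close> by linarith
  with bnd[of i] show False by simp
qed

definition word_of_height :: "(nat \<Rightarrow> int) \<Rightarrow> nat \<Rightarrow> bool" where
  "word_of_height h n \<longleftrightarrow> h n < h (Suc n)"

lemma graph_int_word_of_height:
  assumes "h 0 = 0" and "\<And>n. \<bar>h (Suc n) - h n\<bar> = 1"
  shows "graph_int (word_of_height h) n = h n"
proof (induction n)
  case (Suc n)
  have "step (word_of_height h n) = h (Suc n) - h n"
    using assms(2)[of n] by (auto simp: step_def word_of_height_def abs_if split: if_splits)
  with Suc show ?case by simp
qed (simp add: assms(1))

definition in_plateau :: "nat \<Rightarrow> bool" where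
  "in_plateau n \<longleftrightarrow> (\<exists>k\<ge>1. 4 ^ k \<le> n \<and> n \<le> 2 * 4 ^ k)"

text \<open>Plateaus are entered right after an odd position and left right after an even one,
  so the height always moves by one.\<close>
definition plateau_height :: "nat \<Rightarrow> int" where
  "plateau_height n = int (n mod 2) + (if in_plateau n then 2 else 0)"

lemma enter_plateau_odd:
  assumes "\<not> in_plateau n" and "in_plateau (Suc n)"
  shows "odd n"
proof -
  obtain k :: nat where "k \<ge> 1" "4 ^ k \<le> Suc n" "Suc n \<le> 2 * 4 ^ k"
    using assms(2) unfolding in_plateau_def by blast
  moreover from this assms(1) have "Suc n = 4 ^ k"
    unfolding in_plateau_def by (metis Suc_leD le_SucE)
  ultimately show ?thesis
    by (metis even_Suc even_power even_numeral not_one_le_zero zero_less_iff_neq_zero)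
qed

lemma leave_plateau_even:
  assumes "in_plateau n" and "\<not> in_plateau (Suc n)"
  shows "even n"
proof -
  obtain k :: nat where "k \<ge> 1" "4 ^ k \<le> n" "n \<le> 2 * 4 ^ k"
    using assms(1) unfolding in_plateau_def by blast
  moreover from this assms(2) have "\<not> Suc n \<le> 2 * 4 ^ k"
    unfolding in_plateau_def by (blast intro: le_SucI)
  ultimately have "n = 2 * 4 ^ k"
    by linarith
  then show ?thesis by simp
qed

lemma plateau_height_step: "\<bar>plateau_height (Suc n) - plateau_height n\<bar> = 1"
  using enter_plateau_odd[of n] leave_plateau_even[of n]
  by (cases "in_plateau n"; cases "in_plateau (Suc n)")
    (auto simp: plateau_height_def mod2_eq_if)

lemma plateau_height_bounds: "0 \<le> plateau_height n" "plateau_height n \<le> 3"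
  unfolding plateau_height_def by auto

lemma plateau_height_0: "plateau_height 0 = 0"
  by (simp add: plateau_height_def in_plateau_def)

lemma plateau_height_high:
  "1 \<le> k \<Longrightarrow> 4 ^ k \<le> n \<Longrightarrow> n \<le> 2 * 4 ^ k \<Longrightarrow> 2 \<le> plateau_height n"
  unfolding plateau_height_def in_plateau_def by auto

lemma plateau_height_low:
  assumes "2 * 4 ^ k < n" and "n < 4 ^ Suc k"
  shows "plateau_height n \<le> 1"
proof -
  have "\<not> (4 ^ j \<le> n \<and> n \<le> 2 * 4 ^ j)" for j :: nat
  proof (cases "j \<le> k")
    case True
    then have "(4::nat) ^ j \<le> 4 ^ k" by (simp add: power_increasing)
    with assms(1) show ?thesis by linarith
  next
    case False
    then have "(4::nat) ^ Suc k \<le> 4 ^ j" by (intro power_increasing) auto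
    with assms(2) show ?thesis by linarith
  qed
  then show ?thesis
    unfolding plateau_height_def in_plateau_def by auto
qed

abbreviation plateau_word :: "nat \<Rightarrow> bool" where
  "plateau_word \<equiv> word_of_height plateau_height"

lemma graph_int_plateau_word: "graph_int plateau_word n = plateau_height n"
  using graph_int_word_of_height plateau_height_0 plateau_height_step by blast

lemma bounded_width_plateau_word: "bounded_width plateau_word"
  using plateau_height_bounds
  by (intro bounded_width_if_near_line[where a = 0 and B = 3]) (auto simp: graph_int_plateau_word)

lemma not_bounded_WAP_plateau_word: "\<not> bounded_WAP plateau_word"
proof
  assume "bounded_WAP plateau_word"
  then obtain p :: "nat \<Rightarrow> nat" and C s where p: "strict_mono p" and gap: "\<And>i. p (Suc i) - p i \<le> C"
    and "\<And>i. graph_int plateau_word (p i) =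
      graph_int plateau_word (p 0) + s * (real (p i) - real (p 0))"
    using bounded_WAP_linear_on_cuts by metis
  then have lin: "plateau_height (p i) = plateau_height (p 0) + s * (real (p i) - real (p 0))" for i
    unfolding graph_int_plateau_word by blast
  have "\<bar>s * (real (p i) - real (p 0))\<bar> \<le> 3" for i
    using lin[of i] plateau_height_bounds[of "p i"] plateau_height_bounds[of "p 0"] by linarith
  then have "s = 0"
    using strict_mono_linear_bounded_imp_zero[OF p] by blast
  with lin have level: "plateau_height (p i) = plateau_height (p 0)" for i
    by simp
  define k where "k = Suc (p 0 + C)"
  have "k < 2 ^ k" by (rule less_exp)
  also have "(2::nat) ^ k \<le> 4 ^ k" by (simp add: power_mono)
  finally have big: "p 0 + C < 4 ^ k" unfolding k_def by linarith
  have "p 0 \<le> 4 ^ k" "p 0 \<le> 2 * 4 ^ k"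
    using big by linarith+
  obtain i where "4 ^ k < p i" "p i \<le> 4 ^ k + C"
    using strict_mono_cut_in_window[OF p gap \<open>p 0 \<le> 4 ^ k\<close>] .
  then have "2 \<le> plateau_height (p i)"
    using big by (intro plateau_height_high[of k]) (auto simp: k_def)
  moreover obtain j where "2 * 4 ^ k < p j" "p j \<le> 2 * 4 ^ k + C"
    using strict_mono_cut_in_window[OF p gap \<open>p 0 \<le> 2 * 4 ^ k\<close>] .
  then have "plateau_height (p j) \<le> 1"
    using big by (intro plateau_height_low[of k]) auto
  ultimately show False
    using level[of i] level[of j] by simp
qed

theorem proposition1:
  shows "(\<forall>w :: nat \<Rightarrow> bool. bounded_width w \<longrightarrow> WAP w)
    \<and> (\<exists>w :: nat \<Rightarrow> bool. bounded_width w \<and> \<not> bounded_WAP w)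
    \<and> (\<forall>w :: nat \<Rightarrow> bool. bounded_WAP w \<longrightarrow> bounded_width w)"
  using bounded_width_imp_WAP bounded_width_plateau_word not_bounded_WAP_plateau_word
    bounded_WAP_imp_bounded_width by blast

end
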